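(* Let $q$ be a prime power and let $C\subseteq\mathbb{F}_q^n$ be an $[n,\ell,d]_q$ classical linear code such that $C^{*3}:=\mathrm{span}\{c_1*c_2*c_3: c_1,c_2,c_3\in C\}$ has distance $d'$ and $C^\perp$ has distance $d^\perp$. Then for every positive integer $k<\min\{\ell,d,d',d^\perp\}$, there exists an $[[n-k,\,k,\,\geq\min\{d,d^\perp\}-k]]_q$ quantum CSS code that supports a transversal $CCZ_q$ gate.
   Context: $x*y$ denotes the componentwise product in $\mathbb{F}_q^n$, $x\cdot y=\sum_ix_iy_i$, and $V^\perp$ is the dual w.r.t. this form. An $[n,\ell,d]_q$ classical code is an $\ell$-dimensional subspace of $\mathbb{F}_q^n$ with minimum Hamming weight of nonzero codewords $d$. A quantum CSS code $\mathrm{CSS}(Q_X,Q_Z)$ of length $n$ over $\mathbb{F}_q$ is a pair of subspaces $Q_X,Q_Z\subseteq\mathbb{F}_q^n$ with $Q_X^\perp\subseteq Q_Z$, of dimension $k=\dim Q_Z-\dim Q_X^\perp$ and distance $\min\{|y|:y\in(Q_X\setminus Q_Z^\perp)\cup(Q_Z\setminus Q_X^\perp)\}$ ($|y|$ Hamming weight); it is an $[[n,k,d]]_q$ code. A $Z$ encoding function is an $\mathbb{F}_q$-linear isomorphism $\mathrm{Enc}_Z:\mathbb{F}_q^k\to Q_Z/Q_X^\perp$. A code $Q$ with $Z$ encoding function supports a transversal $CCZ_q$ gate if there is a coefficients vector $b\in\mathbb{F}_q^n$ such that for all $z^{(1)},z^{(2)},z^{(3)}\in\mathbb{F}_q^k$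 and all $z^{(h)\prime}\in\mathrm{Enc}_Z(z^{(h)})$, $\sum_{j\in[k]}z^{(1)}_jz^{(2)}_jz^{(3)}_j=\sum_{j\in[n]}b_jz^{(1)\prime}_jz^{(2)\prime}_jz^{(3)\prime}_j$. *)

theory Defs
  imports Complex_Main "HOL-Library.Function_Algebras"
begin

text \<open>Vectors of \<open>F_q^n\<close> are represented as functions \<open>nat \<Rightarrow> 'a\<close> vanishing outside
  \<open>{..<n}\<close>; the field \<open>F_q\<close> is a finite field type \<open>'a\<close> (so \<open>q = CARD('a)\<close>).
  Addition and the componentwise product \<open>x * y\<close> are the pointwise operations.\<close>

definition fscale :: "'a::field \<Rightarrow> (nat \<Rightarrow> 'a) \<Rightarrow> (nat \<Rightarrow> 'a)" where
  "fscale c x = (\<lambda>i. c * x i)"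

interpretation fv: vector_space "fscale :: 'a::field \<Rightarrow> (nat \<Rightarrow> 'a) \<Rightarrow> (nat \<Rightarrow> 'a)"
  by unfold_locales (auto simp: fscale_def fun_eq_iff algebra_simps)

definition vecs :: "nat \<Rightarrow> (nat \<Rightarrow> 'a::zero) set" where
  "vecs n = {x. \<forall>i\<ge>n. x i = 0}"

definition code_subspace :: "nat \<Rightarrow> (nat \<Rightarrow> 'a::field) set \<Rightarrow> bool" where
  "code_subspace n V \<longleftrightarrow> V \<subseteq> vecs n \<and> fv.subspace V"

definition dotp :: "nat \<Rightarrow> (nat \<Rightarrow> 'a::field) \<Rightarrow> (nat \<Rightarrow> 'a) \<Rightarrow> 'a" where
  "dotp n x y = (\<Sum>i<n. x i * y i)"

definition dual :: "nat \<Rightarrow> (nat \<Rightarrow> 'a::field) set \<Rightarrow> (nat \<Rightarrow> 'a) set" where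
  "dual n V = {y \<in> vecs n. \<forall>x\<in>V. dotp n x y = 0}"

definition hweight :: "nat \<Rightarrow> (nat \<Rightarrow> 'a::zero) \<Rightarrow> nat" where
  "hweight n x = card {i. i < n \<and> x i \<noteq> 0}"

definition has_distance :: "nat \<Rightarrow> (nat \<Rightarrow> 'a::field) set \<Rightarrow> nat \<Rightarrow> bool" where
  "has_distance n V d \<longleftrightarrow>
     (\<exists>x\<in>V. x \<noteq> 0 \<and> hweight n x = d) \<and> (\<forall>x\<in>V. x \<noteq> 0 \<longrightarrow> d \<le> hweight n x)"

definition cube_code :: "(nat \<Rightarrow> 'a::field) set \<Rightarrow> (nat \<Rightarrow> 'a) set" where
  "cube_code C = fv.span {c1 * c2 * c3 | c1 c2 c3. c1 \<in> C \<and> c2 \<in> C \<and> c3 \<in> C}"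

definition classical_code :: "nat \<Rightarrow> nat \<Rightarrow> nat \<Rightarrow> (nat \<Rightarrow> 'a::field) set \<Rightarrow> bool" where
  "classical_code n l d C \<longleftrightarrow> code_subspace n C \<and> fv.dim C = l \<and> has_distance n C d"

definition css_code_ge :: "nat \<Rightarrow> nat \<Rightarrow> nat \<Rightarrow> (nat \<Rightarrow> 'a::field) set \<Rightarrow> (nat \<Rightarrow> 'a) set \<Rightarrow> bool" where
  "css_code_ge n k D QX QZ \<longleftrightarrow>
     code_subspace n QX \<and> code_subspace n QZ \<and> dual n QX \<subseteq> QZ \<and>
     fv.dim QZ - fv.dim (dual n QX) = k \<and> fv.dim (dual n QX) \<le> fv.dim QZ \<and>
     (\<forall>y \<in> (QX - dual n QZ) \<union> (QZ - dual n QX). D \<le> hweight n y)"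

text \<open>A \<open>Z\<close> encoding function \<open>F_q^k \<rightarrow> Q_Z/Q_X^\<perp>\<close>, represented by a linear lift
  \<open>E\<close>: \<open>Enc(z) = E z + Q_X^\<perp>\<close>. The induced map to the quotient must be an isomorphism.\<close>
definition z_encoding :: "nat \<Rightarrow> nat \<Rightarrow> (nat \<Rightarrow> 'a::field) set \<Rightarrow> (nat \<Rightarrow> 'a) set
    \<Rightarrow> ((nat \<Rightarrow> 'a) \<Rightarrow> (nat \<Rightarrow> 'a)) \<Rightarrow> bool" where
  "z_encoding n k QX QZ E \<longleftrightarrow>
     Vector_Spaces.linear fscale fscale E \<and> E ` vecs k \<subseteq> QZ \<and>
     (\<forall>z' \<in> QZ. \<exists>!z \<in> vecs k. z' - E z \<in> dual n QX)"

definition supports_CCZ :: "nat \<Rightarrow> nat \<Rightarrow> (nat \<Rightarrow> 'a::field) set \<Rightarrow> (nat \<Rightarrow> 'a) set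
    \<Rightarrow> ((nat \<Rightarrow> 'a) \<Rightarrow> (nat \<Rightarrow> 'a)) \<Rightarrow> bool" where
  "supports_CCZ n k QX QZ E \<longleftrightarrow>
     (\<exists>b \<in> vecs n. \<forall>z1 z2 z3 z1' z2' z3'.
        z1 \<in> vecs k \<longrightarrow> z2 \<in> vecs k \<longrightarrow> z3 \<in> vecs k \<longrightarrow>
        z1' \<in> vecs n \<longrightarrow> z2' \<in> vecs n \<longrightarrow> z3' \<in> vecs n \<longrightarrow>
        z1' - E z1 \<in> dual n QX \<longrightarrow> z2' - E z2 \<in> dual n QX \<longrightarrow> z3' - E z3 \<in> dual n QX \<longrightarrow>
        (\<Sum>j<k. z1 j * z2 j * z3 j) = (\<Sum>j<n. b j * z1' j * z2' j * z3' j))"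

end

theory Submission
  imports Defs
begin

text \<open>Puncture \<open>C\<close> at its first \<open>k\<close> coordinates. Since \<open>k < d\<close> the puncturing is injective
  on \<open>C\<close>, and since \<open>k < d\<^sup>\<perp>\<close> no nonzero dual word lives on those coordinates, so they form
  an information set: truncation maps \<open>C\<close> onto \<open>F\<^sub>q\<^sup>k\<close>. Take \<open>Q\<^sub>Z\<close> the punctured code and
  \<open>Q\<^sub>X\<close> the dual of the shortened code \<open>S\<close> (words of \<open>C\<close> vanishing on the first \<open>k\<close>
  coordinates, punctured). Then \<open>Q\<^sub>X\<^sup>\<perp> = S \<subseteq> Q\<^sub>Z\<close>, rank--nullity for the truncation gives
  \<open>dim Q\<^sub>Z - dim S = k\<close>, and the logical value of a punctured codeword is its truncation.
  Since \<open>Q\<^sub>X\<close> is the punctured dual code, every nonzero word of \<open>Q\<^sub>X\<close> or \<open>Q\<^sub>Z\<close> is a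
  puncture of a nonzero word of \<open>C\<^sup>\<perp>\<close> or \<open>C\<close> and has lost at most \<open>k\<close> of its weight.
  Finally, \<open>k < d'\<close> makes the puncturing injective on \<open>C\<^sup>*\<^sup>3\<close> as well, so the linear form
  \<open>x \<mapsto> x\<^sub>1 + \<dots> + x\<^sub>k\<close> on \<open>C\<^sup>*\<^sup>3\<close> factors through the puncturing and is a dot product
  with some \<open>b\<close>; applied to \<open>c\<^sub>1 * c\<^sub>2 * c\<^sub>3\<close> this is the transversal \<open>CCZ\<close> identity.\<close>

interpretation fs: vector_space "(*) :: 'a::field \<Rightarrow> 'a \<Rightarrow> 'a"
  by unfold_locales (simp_all add: algebra_simps)

interpretation fp: vector_space_pair "fscale :: 'a::field \<Rightarrow> (nat \<Rightarrow> 'a) \<Rightarrow> (nat \<Rightarrow> 'a)" "(*)"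
  by unfold_locales

interpretation ff: vector_space_pair "fscale :: 'a::field \<Rightarrow> (nat \<Rightarrow> 'a) \<Rightarrow> (nat \<Rightarrow> 'a)" fscale
  by unfold_locales

declare fs.scale_scale [simp del] \<comment> \<open>makes the simplifier loop on products in the field\<close>

subsection \<open>Rank and nullity\<close>

lemma (in vector_space_pair) dim_image_eq_of_inj_on:
  assumes f: "Vector_Spaces.linear s1 s2 f" and inj: "inj_on f (vs1.span S)"
  shows "vs2.dim (f ` S) = vs1.dim S"
proof -
  obtain B where B: "B \<subseteq> S" "vs1.independent B" "S \<subseteq> vs1.span B" "card B = vs1.dim S"
    using vs1.basis_exists[of S] by blast
  have span_eq: "vs1.span S = vs1.span B"
    using B(1,3) vs1.span_mono vs1.span_span by blast
  have "vs2.dim (f ` S) = vs2.dim (vs2.span (f ` B))"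
    using linear_span_image[OF f, of S] linear_span_image[OF f, of B] span_eq
    by (metis vs2.dim_span)
  also have "\<dots> = card (f ` B)"
    using linear_independent_injective_image[OF f B(2)] inj span_eq
    by (simp add: vs2.dim_eq_card_independent)
  also have "\<dots> = card B"
    by (rule card_image[OF inj_on_subset[OF inj order_trans[OF B(1) vs1.span_superset]]])
  finally show ?thesis using B(4) by simp
qed

lemma (in vector_space) span_Int_span_eq_0:
  assumes "independent B" "X \<subseteq> B" "Y \<subseteq> B" "X \<inter> Y = {}"
  shows "span X \<inter> span Y = {0}"
proof (intro equalityI subsetI)
  fix x assume x: "x \<in> span X \<inter> span Y"
  interpret p: vector_space_pair scale scale by unfold_locales
  \<comment> \<open>the projection of \<open>span B\<close> onto \<open>span Y\<close> along \<open>B - Y\<close>\<close>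
  obtain \<pi> where \<pi>: "Vector_Spaces.linear scale scale \<pi>" "\<forall>b\<in>B. \<pi> b = (if b \<in> Y then b else 0)"
    using p.linear_independent_extend[OF assms(1), of "\<lambda>b. if b \<in> Y then b else 0"] by blast
  have "\<pi> b = b" if "b \<in> Y" for b
    using \<pi>(2) assms(3) that by auto
  then have "\<pi> x = x"
    using p.linear_eq_on[OF \<pi>(1) linear_id, of x Y] x by simp
  moreover have "\<pi> b = 0" if "b \<in> X" for b
  proof -
    have "b \<in> B" "b \<notin> Y" using assms(2,4) that by auto
    then show ?thesis using \<pi>(2) by simp
  qed
  then have "\<pi> x = 0"
    using p.linear_eq_0_on_span[OF \<pi>(1), of X x] x by simp
  ultimately show "x \<in> {0}" by simp
qed (simp add: span_zero)

lemma (in vector_space_pair) dim_kernel_add_dim_image: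
  assumes f: "Vector_Spaces.linear s1 s2 f" and V: "vs1.subspace V"
    and W: "finite W" "V \<subseteq> vs1.span W"
  shows "vs1.dim {x \<in> V. f x = 0} + vs2.dim (f ` V) = vs1.dim V"
proof -
  define K where "K = {x \<in> V. f x = 0}"
  have K: "vs1.subspace K"
    using vs1.subspace_inter[OF V linear_subspace_kernel[OF f]] by (simp add: K_def Int_def)
  obtain BK where BK: "BK \<subseteq> K" "vs1.independent BK" "K \<subseteq> vs1.span BK" "card BK = vs1.dim K"
    using vs1.basis_exists[of K] by blast
  obtain B where B: "BK \<subseteq> B" "B \<subseteq> V" "vs1.independent B" "V \<subseteq> vs1.span B"
    using vs1.maximal_independent_subset_extend[of BK V] BK(1,2) by (auto simp: K_def)
  have "finite B"
    using vs1.independent_span_bound[OF W(1) B(3)] B(2) W(2) by blast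
  define R where "R = B - BK"
  have R_indep: "vs1.independent R"
    using vs1.independent_mono[OF B(3)] by (auto simp: R_def)
  have R_V: "vs1.span R \<subseteq> V"
    unfolding R_def using vs1.span_minimal[of "B - BK" V] V B(2) by blast
  have span_R_kernel: "x = 0" if "x \<in> vs1.span R" "f x = 0" for x
  proof -
    have "x \<in> vs1.span BK"
      using that R_V BK(3) by (auto simp: K_def)
    then show ?thesis
      using vs1.span_Int_span_eq_0[OF B(3) B(1), of R] that(1) by (auto simp: R_def)
  qed
  have inj: "inj_on f (vs1.span R)"
    using linear_inj_on_iff_eq_0[OF f vs1.subspace_span] span_R_kernel by blast
  have image: "f ` V = f ` vs1.span R"
  proof
    show "f ` V \<subseteq> f ` vs1.span R"
    proof
      fix v assume "v \<in> f ` V"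
      then obtain u where u: "u \<in> V" "v = f u" by blast
      have "vs1.span B = vs1.span (BK \<union> R)"
        using B(1) by (simp add: R_def Un_absorb1)
      then obtain x y where xy: "u = x + y" "x \<in> vs1.span BK" "y \<in> vs1.span R"
        using u(1) B(4) vs1.span_Un by auto
      have "f x = 0"
        using vs1.span_minimal[OF BK(1) K] xy(2) by (auto simp: K_def)
      then show "v \<in> f ` vs1.span R"
        using xy u(2) linear_add[OF f] by auto
    qed
  qed (use R_V in blast)
  have "vs2.dim (f ` V) = card R"
    using dim_image_eq_of_inj_on[OF f, of "vs1.span R"] inj
    by (simp add: image vs1.span_span vs1.dim_eq_card_independent[OF R_indep])
  moreover have "vs1.dim V = card BK + card R"
  proof -
    have "finite BK" using \<open>finite B\<close> B(1) finite_subset by blast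
    then have "card B = card BK + card R"
      using card_Diff_subset[OF _ B(1)] card_mono[OF \<open>finite B\<close> B(1)] by (simp add: R_def)
    then show ?thesis using vs1.basis_card_eq_dim[OF B(2,4,3)] by simp
  qed
  ultimately show ?thesis using BK(4) by (simp add: K_def)
qed

subsection \<open>Coordinates and duality\<close>

lemma fscale_apply [simp]: "fscale c x i = c * x i"
  by (simp add: fscale_def)

lemma sum_fun_apply: "(\<Sum>j\<in>A. f j) i = (\<Sum>j\<in>A. f j i)"
  for f :: "'b \<Rightarrow> 'c \<Rightarrow> 'a::comm_monoid_add"
  by (induction A rule: infinite_finite_induct) auto

definition unit_vec :: "nat \<Rightarrow> nat \<Rightarrow> 'a::zero_neq_one" where
  "unit_vec j = (\<lambda>i. if i = j then 1 else 0)"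

lemma unit_vec_in_vecs: "j < n \<Longrightarrow> unit_vec j \<in> vecs n"
  by (simp add: unit_vec_def vecs_def)

lemma vecs_eq_sum_unit_vec:
  assumes "y \<in> vecs n"
  shows "y = (\<Sum>j<n. fscale (y j) (unit_vec j))"
  using assms
  by (auto simp: fun_eq_iff sum_fun_apply unit_vec_def vecs_def if_distrib cong: if_cong)

lemma vecs_subset_span_unit_vec: "vecs n \<subseteq> fv.span (unit_vec ` {..<n})"
proof
  fix y :: "nat \<Rightarrow> 'a" assume "y \<in> vecs n"
  have "(\<Sum>j<n. fscale (y j) (unit_vec j)) \<in> fv.span (unit_vec ` {..<n})"
    by (intro fv.span_sum fv.span_scale fv.span_base) auto
  then show "y \<in> fv.span (unit_vec ` {..<n})"
    using vecs_eq_sum_unit_vec[OF \<open>y \<in> vecs n\<close>] by simp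
qed

lemma independent_unit_vec: "fv.independent (unit_vec ` A :: (nat \<Rightarrow> 'a::field) set)"
  unfolding fv.dependent_def
proof clarify
  fix j assume "j \<in> A" and dep: "(unit_vec j :: nat \<Rightarrow> 'a) \<in> fv.span (unit_vec ` A - {unit_vec j})"
  have "fv.span (unit_vec ` A - {unit_vec j}) \<subseteq> {v :: nat \<Rightarrow> 'a. v j = 0}"
    by (rule fv.span_minimal) (auto simp: fv.subspace_def unit_vec_def)
  from subsetD[OF this dep] show False
    by (simp add: unit_vec_def)
qed

lemma dim_vecs: "fv.dim (vecs n :: (nat \<Rightarrow> 'a::field) set) = n"
proof -
  have "inj_on (unit_vec :: nat \<Rightarrow> nat \<Rightarrow> 'a) {..<n}"
    by (auto simp: inj_on_def unit_vec_def fun_eq_iff split: if_splits)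
  then have "card (unit_vec ` {..<n} :: (nat \<Rightarrow> 'a) set) = n"
    by (simp add: card_image)
  moreover have "card (unit_vec ` {..<n} :: (nat \<Rightarrow> 'a) set) = fv.dim (vecs n :: (nat \<Rightarrow> 'a) set)"
    using unit_vec_in_vecs
    by (intro fv.basis_card_eq_dim vecs_subset_span_unit_vec independent_unit_vec) blast
  ultimately show ?thesis by simp
qed

lemma linear_functional_eq_dotp:
  fixes g :: "(nat \<Rightarrow> 'a::field) \<Rightarrow> 'a"
  assumes "Vector_Spaces.linear fscale (*) g"
  shows "\<exists>b\<in>vecs n. \<forall>y\<in>vecs n. g y = dotp n y b"
proof
  define b where "b j = (if j < n then g (unit_vec j) else 0)" for j
  show "b \<in> vecs n" by (simp add: b_def vecs_def)
  show "\<forall>y\<in>vecs n. g y = dotp n y b"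
  proof
    fix y :: "nat \<Rightarrow> 'a" assume "y \<in> vecs n"
    then have "g y = g (\<Sum>j<n. fscale (y j) (unit_vec j))"
      by (rule arg_cong[OF vecs_eq_sum_unit_vec])
    also have "\<dots> = (\<Sum>j<n. y j * g (unit_vec j))"
      by (simp add: fp.linear_sum[OF assms] fp.linear_scale[OF assms])
    finally show "g y = dotp n y b" by (simp add: dotp_def b_def)
  qed
qed

lemma dotp_commute: "dotp n x y = dotp n y x"
  by (simp add: dotp_def mult.commute)

lemma linear_dotp: "Vector_Spaces.linear fscale (*) (dotp n x)"
  by (auto simp: Vector_Spaces.linear_iff dotp_def sum.distrib sum_distrib_left algebra_simps
      fv.vector_space_axioms fs.vector_space_axioms)

lemma zero_in_dual: "0 \<in> dual n V"
  by (simp add: dual_def vecs_def dotp_def)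

lemma dual_code_subspace: "code_subspace n (dual n V)"
  by (auto simp: code_subspace_def dual_def fv.subspace_def vecs_def fp.linear_0[OF linear_dotp]
      fp.linear_add[OF linear_dotp] fp.linear_scale[OF linear_dotp])

lemma exists_dual_vector_not_orthogonal:
  assumes V: "code_subspace n V" and y: "y \<in> vecs n" "y \<notin> V"
  shows "\<exists>w\<in>dual n V. dotp n y w \<noteq> 0"
proof -
  obtain B where B: "B \<subseteq> V" "fv.independent B" "V \<subseteq> fv.span B"
    by (rule fv.maximal_independent_subset)
  have "y \<notin> fv.span B"
    using fv.span_minimal[OF B(1)] V y(2) by (auto simp: code_subspace_def)
  then have "fv.independent (insert y B)"
    by (rule fv.independent_insertI[OF _ B(2)])
  then obtain g where g: "Vector_Spaces.linear fscale (*) g"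
      "\<forall>x\<in>insert y B. g x = (if x = y then 1 else 0)"
    using fp.linear_independent_extend[of _ "\<lambda>x. if x = y then 1 else 0"] by blast
  have g_V: "g x = 0" if "x \<in> V" for x
  proof (rule fp.linear_eq_0_on_span[OF g(1)])
    show "x \<in> fv.span B" using that B(3) by blast
    show "g b = 0" if "b \<in> B" for b
      using g(2) that fv.span_base[OF that] \<open>y \<notin> fv.span B\<close> by auto
  qed
  obtain w where w: "w \<in> vecs n" "\<forall>x\<in>vecs n. g x = dotp n x w"
    using linear_functional_eq_dotp[OF g(1)] by blast
  have "dotp n x w = 0" if "x \<in> V" for x
    using V g_V[OF that] w(2) that by (metis code_subspace_def subsetD)
  then have "w \<in> dual n V"
    using w(1) by (simp add: dual_def)
  moreover have "dotp n y w \<noteq> 0"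
    using w(2) y(1) g(2) by simp
  ultimately show ?thesis by blast
qed

lemma dual_dual:
  assumes "code_subspace n V"
  shows "dual n (dual n V) = V"
proof
  show "V \<subseteq> dual n (dual n V)"
    using assms by (auto simp: code_subspace_def dual_def dotp_commute)
  show "dual n (dual n V) \<subseteq> V"
  proof
    fix y assume y: "y \<in> dual n (dual n V)"
    show "y \<in> V"
    proof (rule ccontr)
      assume "y \<notin> V"
      moreover have "y \<in> vecs n" using y by (simp add: dual_def)
      ultimately obtain w where "w \<in> dual n V" "dotp n y w \<noteq> 0"
        using exists_dual_vector_not_orthogonal[OF assms] by blast
      then show False
        using y by (auto simp: dual_def dotp_commute)
    qed
  qed
qed

subsection \<open>Puncturing and truncating\<close>

definition puncture :: "nat \<Rightarrow> (nat \<Rightarrow> 'a) \<Rightarrow> nat \<Rightarrow> 'a" where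
  "puncture k x = (\<lambda>i. x (i + k))"

definition truncate :: "nat \<Rightarrow> (nat \<Rightarrow> 'a::zero) \<Rightarrow> nat \<Rightarrow> 'a" where
  "truncate k x = (\<lambda>i. if i < k then x i else 0)"

definition prepend_zeros :: "nat \<Rightarrow> (nat \<Rightarrow> 'a::zero) \<Rightarrow> nat \<Rightarrow> 'a" where
  "prepend_zeros k y = (\<lambda>i. if i < k then 0 else y (i - k))"

lemma linear_puncture: "Vector_Spaces.linear fscale fscale (puncture k)"
  by (auto simp: Vector_Spaces.linear_iff puncture_def fv.vector_space_axioms)

lemma linear_truncate: "Vector_Spaces.linear fscale fscale (truncate k)"
  by (auto simp: Vector_Spaces.linear_iff truncate_def fun_eq_iff fv.vector_space_axioms)

lemma puncture_add [simp]: "puncture k (x + y) = puncture k x + puncture k y"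
  and puncture_diff [simp]: "puncture k (x - y) = puncture k x - puncture k y"
  by (simp_all add: puncture_def fun_eq_iff)

lemma truncate_add [simp]: "truncate k (x + y) = truncate k x + truncate k y"
  and truncate_diff [simp]: "truncate k (x - y) = truncate k x - truncate k y"
  for x y :: "nat \<Rightarrow> 'a::ab_group_add"
  by (simp_all add: truncate_def fun_eq_iff)

lemma puncture_in_vecs: "x \<in> vecs n \<Longrightarrow> puncture k x \<in> vecs (n - k)"
  by (auto simp: vecs_def puncture_def)

lemma truncate_in_vecs: "truncate k x \<in> vecs k"
  by (simp add: truncate_def vecs_def)

lemma puncture_eq_0_iff: "puncture k x = 0 \<longleftrightarrow> x \<in> vecs k"
  by (auto simp: puncture_def vecs_def fun_eq_iff) (metis le_add_diff_inverse2)

lemma puncture_prepend_zeros [simp]: "puncture k (prepend_zeros k y) = y"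
  by (simp add: puncture_def prepend_zeros_def)

lemma truncate_prepend_zeros [simp]: "truncate k (prepend_zeros k y) = 0"
  by (simp add: truncate_def prepend_zeros_def fun_eq_iff)

lemma prepend_zeros_puncture:
  assumes "truncate k c = 0"
  shows "prepend_zeros k (puncture k c) = c"
proof
  fix i show "prepend_zeros k (puncture k c) i = c i"
    using fun_cong[OF assms, of i]
    by (cases "i < k") (simp_all add: truncate_def prepend_zeros_def puncture_def)
qed

lemma prepend_zeros_in_vecs:
  assumes "y \<in> vecs (n - k)"
  shows "prepend_zeros k y \<in> vecs n"
  unfolding vecs_def prepend_zeros_def
proof clarify
  fix i assume "n \<le> i"
  then show "(if i < k then 0 else y (i - k)) = 0"
    using assms by (simp add: vecs_def diff_le_mono)
qed

lemma sum_lessThan_split: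
  fixes f :: "nat \<Rightarrow> 'a::comm_monoid_add"
  assumes "k \<le> n"
  shows "(\<Sum>i<n. f i) = (\<Sum>i<k. f i) + (\<Sum>i<n - k. f (i + k))"
proof -
  have "(\<Sum>i<n. f i) = sum f {0..<k} + sum f {k..<n}"
    using sum.atLeastLessThan_concat[of 0 k n f] assms by (simp add: lessThan_atLeast0)
  also have "sum f {k..<n} = (\<Sum>i\<in>{0..<n - k}. f (i + k))"
    using sum.shift_bounds_nat_ivl[of f 0 k "n - k"] assms by simp
  finally show ?thesis by (simp add: lessThan_atLeast0)
qed

lemma dotp_prepend_zeros:
  assumes "k \<le> n"
  shows "dotp n x (prepend_zeros k y) = dotp (n - k) (puncture k x) y"
  unfolding dotp_def using sum_lessThan_split[OF assms, of "\<lambda>i. x i * prepend_zeros k y i"]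
  by (simp add: prepend_zeros_def puncture_def)

lemma dotp_truncate:
  assumes "k \<le> n" "w \<in> vecs k"
  shows "dotp n x w = dotp k (truncate k x) w"
  unfolding dotp_def using sum_lessThan_split[OF assms(1), of "\<lambda>i. x i * w i"] assms(2)
  by (simp add: truncate_def vecs_def)

subsection \<open>Weights\<close>

lemma hweight_le_length: "hweight n x \<le> n"
  unfolding hweight_def by (rule order_trans[OF card_mono[of "{..<n}"]]) auto

lemma has_distance_le_length:
  assumes "has_distance n V d"
  shows "d \<le> n"
  using assms hweight_le_length by (metis has_distance_def)

lemma has_distance_eq_0:
  assumes "has_distance n V D" "x \<in> V" "x \<in> vecs k" "k < D"
  shows "x = 0"
proof (rule ccontr)
  assume "x \<noteq> 0"
  then have "D \<le> hweight n x"
    using assms(1,2) by (simp add: has_distance_def)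
  moreover have "{i. i < n \<and> x i \<noteq> 0} \<subseteq> {..<k}"
    using assms(3) leI by (auto simp: vecs_def)
  then have "hweight n x \<le> k"
    unfolding hweight_def by (metis card_lessThan card_mono finite_lessThan)
  ultimately show False using assms(4) by simp
qed

lemma hweight_le_puncture:
  assumes "x \<in> vecs n"
  shows "hweight n x \<le> k + hweight (n - k) (puncture k x)"
proof -
  let ?P = "{i. i < n - k \<and> puncture k x i \<noteq> 0}"
  have "{i. i < n \<and> x i \<noteq> 0} \<subseteq> {..<k} \<union> (\<lambda>i. i + k) ` ?P"
  proof
    fix i assume i: "i \<in> {i. i < n \<and> x i \<noteq> 0}"
    show "i \<in> {..<k} \<union> (\<lambda>i. i + k) ` ?P"
    proof (cases "i < k")
      case False
      then have "i = (i - k) + k" "i - k \<in> ?P"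
        using i by (auto simp: puncture_def)
      then show ?thesis by blast
    qed simp
  qed
  then have "hweight n x \<le> card ({..<k} \<union> (\<lambda>i. i + k) ` ?P)"
    unfolding hweight_def by (intro card_mono) auto
  also have "\<dots> \<le> card {..<k} + card ((\<lambda>i. i + k) ` ?P)"
    by (rule card_Un_le)
  also have "\<dots> \<le> k + card ?P"
    using card_image_le[of ?P "\<lambda>i. i + k"] by simp
  finally show ?thesis by (simp add: hweight_def)
qed

lemma hweight_puncture_ge:
  assumes "has_distance n V D" "V \<subseteq> vecs n" "x \<in> V" "puncture k x \<noteq> 0"
  shows "D - k \<le> hweight (n - k) (puncture k x)"
proof -
  have "x \<noteq> 0" using assms(4) by (auto simp: puncture_def)
  then have "D \<le> hweight n x" using assms(1,3) by (simp add: has_distance_def)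
  then show ?thesis using hweight_le_puncture[of x n k] assms(2,3) by auto
qed

lemma inj_on_puncture:
  assumes "fv.subspace V" "has_distance n V D" "k < D"
  shows "inj_on (puncture k) V"
  using ff.linear_inj_on_iff_eq_0[OF linear_puncture assms(1)] has_distance_eq_0[OF assms(2) _ _ assms(3)]
  by (simp add: puncture_eq_0_iff)

subsection \<open>Punctured and shortened codes\<close>

definition shortened :: "nat \<Rightarrow> (nat \<Rightarrow> 'a::zero) set \<Rightarrow> (nat \<Rightarrow> 'a) set" where
  "shortened k C = puncture k ` {c \<in> C. truncate k c = 0}"

lemma code_subspace_puncture:
  assumes "code_subspace n C"
  shows "code_subspace (n - k) (puncture k ` C)"
  using assms ff.linear_subspace_image[OF linear_puncture] puncture_in_vecs
  by (fastforce simp: code_subspace_def)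

lemma subspace_shortened:
  assumes "fv.subspace C"
  shows "fv.subspace (shortened k C)"
proof -
  have "fv.subspace {c \<in> C. truncate k c = 0}"
    using fv.subspace_inter[OF assms ff.linear_subspace_kernel[OF linear_truncate]]
    by (simp add: Int_def)
  then show ?thesis
    unfolding shortened_def by (rule ff.linear_subspace_image[OF linear_puncture])
qed

lemma shortened_subset: "shortened k C \<subseteq> puncture k ` C"
  by (auto simp: shortened_def)

lemma code_subspace_shortened:
  assumes "code_subspace n C"
  shows "code_subspace (n - k) (shortened k C)"
  using subspace_shortened[of C k] shortened_subset[of k C] code_subspace_puncture[OF assms, of k] assms
  unfolding code_subspace_def by blast

lemma dual_puncture_dual:
  assumes C: "code_subspace n C" and "k \<le> n"
  shows "dual (n - k) (puncture k ` dual n C) = shortened k C"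
proof
  show "dual (n - k) (puncture k ` dual n C) \<subseteq> shortened k C"
  proof
    fix y assume y: "y \<in> dual (n - k) (puncture k ` dual n C)"
    have "prepend_zeros k y \<in> dual n (dual n C)"
      using y prepend_zeros_in_vecs by (auto simp: dual_def dotp_prepend_zeros[OF \<open>k \<le> n\<close>])
    then have "prepend_zeros k y \<in> C" by (simp add: dual_dual[OF C])
    then show "y \<in> shortened k C"
      unfolding shortened_def by (auto intro!: image_eqI[of y _ "prepend_zeros k y"])
  qed
  show "shortened k C \<subseteq> dual (n - k) (puncture k ` dual n C)"
  proof
    fix y assume "y \<in> shortened k C"
    then obtain c where c: "c \<in> C" "truncate k c = 0" "y = puncture k c"
      by (auto simp: shortened_def)
    have "dotp (n - k) (puncture k x) y = 0" if "x \<in> dual n C" for x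
      using that c dotp_prepend_zeros[OF \<open>k \<le> n\<close>, of x y] prepend_zeros_puncture[OF c(2)]
      by (auto simp: dual_def dotp_commute)
    moreover have "y \<in> vecs (n - k)"
      using c C puncture_in_vecs by (auto simp: code_subspace_def)
    ultimately show "y \<in> dual (n - k) (puncture k ` dual n C)"
      by (auto simp: dual_def)
  qed
qed

lemma dual_shortened:
  assumes "code_subspace n C" "k \<le> n"
  shows "dual (n - k) (shortened k C) = puncture k ` dual n C"
  using dual_dual[OF code_subspace_puncture[OF dual_code_subspace]] dual_puncture_dual[OF assms]
  by metis

lemma truncate_image_eq_vecs:
  fixes C :: "(nat \<Rightarrow> 'a::field) set"
  assumes C: "code_subspace n C" and "k \<le> n"
    and dist: "has_distance n (dual n C) D" and "k < D"
  shows "truncate k ` C = vecs k"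
proof -
  have T: "code_subspace k (truncate k ` C)"
    using C ff.linear_subspace_image[OF linear_truncate] truncate_in_vecs
    by (auto simp: code_subspace_def)
  have "dual k (truncate k ` C) = {0}"
  proof (intro equalityI subsetI)
    fix w assume w: "w \<in> dual k (truncate k ` C)"
    then have "w \<in> vecs k" by (simp add: dual_def)
    moreover from this have "w \<in> vecs n"
      using \<open>k \<le> n\<close> by (simp add: vecs_def)
    then have "w \<in> dual n C"
      using w dotp_truncate[OF \<open>k \<le> n\<close> \<open>w \<in> vecs k\<close>] by (auto simp: dual_def)
    ultimately show "w \<in> {0}"
      using has_distance_eq_0[OF dist _ _ \<open>k < D\<close>] by blast
  qed (simp add: zero_in_dual)
  moreover have "dual k {0} = (vecs k :: (nat \<Rightarrow> 'a) set)"
    by (simp add: dual_def dotp_def)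
  ultimately show ?thesis
    using dual_dual[OF T] by simp
qed

lemma dim_puncture_image:
  fixes C :: "(nat \<Rightarrow> 'a::field) set"
  assumes C: "code_subspace n C" and inj: "inj_on (puncture k) C"
    and trunc: "truncate k ` C = vecs k"
  shows "fv.dim (puncture k ` C) = fv.dim (shortened k C) + k"
proof -
  have sub: "fv.subspace C" using C by (simp add: code_subspace_def)
  then have "fv.span C = C" by (simp add: fv.span_eq_iff)
  have "fv.dim (puncture k ` C) = fv.dim C"
    by (rule ff.dim_image_eq_of_inj_on[OF linear_puncture]) (simp only: \<open>fv.span C = C\<close> inj)
  moreover have "fv.dim (shortened k C) = fv.dim {c \<in> C. truncate k c = 0}"
    unfolding shortened_def
    by (rule ff.dim_image_eq_of_inj_on[OF linear_puncture inj_on_subset[OF inj]])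
      (use fv.span_minimal[OF _ sub, of "{c \<in> C. truncate k c = 0}"] in blast)
  moreover have "fv.dim {c \<in> C. truncate k c = 0} + fv.dim (vecs k :: (nat \<Rightarrow> 'a) set) = fv.dim C"
    using ff.dim_kernel_add_dim_image[OF linear_truncate[of k] sub, where W = "unit_vec ` {..<n}"]
      C vecs_subset_span_unit_vec[of n] trunc
    by (auto simp: code_subspace_def)
  ultimately show ?thesis by (simp add: dim_vecs)
qed

lemma puncture_diff_in_shortened_iff:
  assumes C: "fv.subspace C" "inj_on (puncture k) C" and c: "c \<in> C" "c' \<in> C"
  shows "puncture k c - puncture k c' \<in> shortened k C \<longleftrightarrow> truncate k c = truncate k c'"
proof
  have "c - c' \<in> C" using fv.subspace_diff[OF C(1) c] .
  assume "puncture k c - puncture k c' \<in> shortened k C"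
  then obtain s where s: "s \<in> C" "truncate k s = 0" "puncture k c - puncture k c' = puncture k s"
    unfolding shortened_def by blast
  then have "c - c' = s"
    using inj_onD[OF C(2) _ \<open>c - c' \<in> C\<close> s(1)] by simp
  then show "truncate k c = truncate k c'"
    using s(2) by (metis right_minus_eq truncate_diff)
next
  assume "truncate k c = truncate k c'"
  then have "c - c' \<in> {c \<in> C. truncate k c = 0}"
    using fv.subspace_diff[OF C(1) c] by simp
  then show "puncture k c - puncture k c' \<in> shortened k C"
    unfolding shortened_def by (rule rev_image_eqI) simp
qed

lemma shortened_coset_lift:
  assumes C: "fv.subspace C" and "c0 \<in> C" "y - puncture k c0 \<in> shortened k C"
  shows "\<exists>c\<in>C. puncture k c = y \<and> truncate k c = truncate k c0"
proof -
  obtain s where s: "s \<in> C" "truncate k s = 0" "y - puncture k c0 = puncture k s"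
    using assms(3) by (auto simp: shortened_def)
  have "c0 + s \<in> C" using fv.subspace_add[OF C \<open>c0 \<in> C\<close> s(1)] .
  moreover have "puncture k (c0 + s) = y"
    using s(3) by (simp add: algebra_simps)
  moreover have "truncate k (c0 + s) = truncate k c0"
    using s(2) by simp
  ultimately show ?thesis by blast
qed

lemma linear_sum_prefix: "Vector_Spaces.linear fscale (*) (\<lambda>x. \<Sum>j<k. x j :: 'a::field)"
  by (auto simp: Vector_Spaces.linear_iff sum.distrib sum_distrib_left
      fv.vector_space_axioms fs.vector_space_axioms)

lemma cube_code_transversal_coefficients:
  fixes C :: "(nat \<Rightarrow> 'a::field) set"
  assumes "C \<subseteq> vecs n" "inj_on (puncture k) (cube_code C)"
  shows "\<exists>b\<in>vecs (n - k). \<forall>c1\<in>C. \<forall>c2\<in>C. \<forall>c3\<in>C. (\<Sum>j<k. c1 j * c2 j * c3 j) =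
    (\<Sum>j<n - k. b j * puncture k c1 j * puncture k c2 j * puncture k c3 j)"
proof -
  have "fv.subspace (cube_code C)"
    unfolding cube_code_def by (rule fv.subspace_span)
  then obtain G where G: "Vector_Spaces.linear fscale fscale G" "\<forall>x\<in>cube_code C. G (puncture k x) = x"
    using ff.linear_exists_left_inverse_on[OF linear_puncture _ assms(2)] by blast
  obtain b where b: "b \<in> vecs (n - k)" "\<forall>y\<in>vecs (n - k). (\<Sum>j<k. G y j) = dotp (n - k) y b"
    using linear_functional_eq_dotp[OF Vector_Spaces.linear_compose[OF G(1) linear_sum_prefix[of k]],
        where n = "n - k"]
    by (auto simp: o_def)
  show ?thesis
  proof (intro bexI[OF _ b(1)] ballI)
    fix c1 c2 c3 assume c: "c1 \<in> C" "c2 \<in> C" "c3 \<in> C"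
    define x where "x = c1 * c2 * c3"
    have "x \<in> cube_code C"
      unfolding cube_code_def x_def using c by (intro fv.span_base) blast
    moreover have "x \<in> vecs n"
      using c assms(1) by (auto simp: x_def vecs_def)
    ultimately have "(\<Sum>j<k. x j) = dotp (n - k) (puncture k x) b"
      using G(2) b(2) puncture_in_vecs by metis
    then show "(\<Sum>j<k. c1 j * c2 j * c3 j) =
        (\<Sum>j<n - k. b j * puncture k c1 j * puncture k c2 j * puncture k c3 j)"
      by (simp add: x_def dotp_def puncture_def mult_ac)
  qed
qed

subsection \<open>The quantum code\<close>

lemma css_code_ge_puncture_shortened:
  fixes C :: "(nat \<Rightarrow> 'a::field) set"
  assumes C: "code_subspace n C" and dist: "has_distance n C d"
    and dist_dual: "has_distance n (dual n C) dperp" and "k < d" "k < dperp"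
  shows "css_code_ge (n - k) k (min d dperp - k) (dual (n - k) (shortened k C)) (puncture k ` C)"
proof -
  have "k \<le> n" using has_distance_le_length[OF dist] \<open>k < d\<close> by simp
  have inj: "inj_on (puncture k) C"
    using inj_on_puncture[OF _ dist \<open>k < d\<close>] C by (simp add: code_subspace_def)
  have trunc: "truncate k ` C = vecs k"
    by (rule truncate_image_eq_vecs[OF C \<open>k \<le> n\<close> dist_dual \<open>k < dperp\<close>])
  have dual_QX: "dual (n - k) (dual (n - k) (shortened k C)) = shortened k C"
    by (rule dual_dual[OF code_subspace_shortened[OF C]])
  have weight: "min d dperp - k \<le> hweight (n - k) (puncture k x)"
    if "x \<in> C \<union> dual n C" "puncture k x \<noteq> 0" for x
    using that hweight_puncture_ge[OF dist, of x k] hweight_puncture_ge[OF dist_dual, of x k]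
      C dual_code_subspace[of n C] by (fastforce simp: code_subspace_def)
  have "0 \<in> shortened k C"
    using subspace_shortened[of C k] C by (simp add: code_subspace_def fv.subspace_0)
  show ?thesis
    unfolding css_code_ge_def dual_QX
  proof (intro conjI ballI)
    show "code_subspace (n - k) (dual (n - k) (shortened k C))"
      by (rule dual_code_subspace)
    show "code_subspace (n - k) (puncture k ` C)"
      by (rule code_subspace_puncture[OF C])
    show "shortened k C \<subseteq> puncture k ` C"
      by (rule shortened_subset)
    show "fv.dim (puncture k ` C) - fv.dim (shortened k C) = k"
      "fv.dim (shortened k C) \<le> fv.dim (puncture k ` C)"
      using dim_puncture_image[OF C inj trunc] by simp_all
    fix y assume y: "y \<in> dual (n - k) (shortened k C) - dual (n - k) (puncture k ` C) \<union>
      (puncture k ` C - shortened k C)"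
    then have "y \<noteq> 0"
      using zero_in_dual[of "n - k" "puncture k ` C"] \<open>0 \<in> shortened k C\<close> by blast
    moreover obtain x where "x \<in> C \<union> dual n C" "y = puncture k x"
      using y unfolding dual_shortened[OF C \<open>k \<le> n\<close>] by blast
    ultimately show "min d dperp - k \<le> hweight (n - k) y"
      using weight[of x] by simp
  qed
qed

lemma z_encoding_puncture_shortened:
  assumes C: "code_subspace n C" "inj_on (puncture k) C"
    and L: "Vector_Spaces.linear fscale fscale L" "range L \<subseteq> C" "\<forall>z\<in>vecs k. truncate k (L z) = z"
  shows "z_encoding (n - k) k (dual (n - k) (shortened k C)) (puncture k ` C) (puncture k \<circ> L)"
  unfolding z_encoding_def dual_dual[OF code_subspace_shortened[OF C(1)]]
proof (intro conjI ballI)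
  show "Vector_Spaces.linear fscale fscale (puncture k \<circ> L)"
    by (rule Vector_Spaces.linear_compose[OF L(1) linear_puncture])
  show "(puncture k \<circ> L) ` vecs k \<subseteq> puncture k ` C"
    using L(2) by auto
  fix z' assume "z' \<in> puncture k ` C"
  then obtain c where c: "c \<in> C" "z' = puncture k c" by blast
  have "z' - (puncture k \<circ> L) z \<in> shortened k C \<longleftrightarrow> z = truncate k c" if "z \<in> vecs k" for z
    using puncture_diff_in_shortened_iff[OF _ C(2) c(1), of "L z"] C(1) L(2,3) that c(2)
    by (auto simp: code_subspace_def)
  then show "\<exists>!z. z \<in> vecs k \<and> z' - (puncture k \<circ> L) z \<in> shortened k C"
    using truncate_in_vecs by blast
qed

lemma supports_CCZ_puncture_shortened:
  assumes C: "code_subspace n C" "inj_on (puncture k) (cube_code C)"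
    and L: "range L \<subseteq> C" "\<forall>z\<in>vecs k. truncate k (L z) = z"
  shows "supports_CCZ (n - k) k (dual (n - k) (shortened k C)) QZ (puncture k \<circ> L)"
proof -
  have sub: "fv.subspace C" using C(1) by (simp add: code_subspace_def)
  have lift: "\<exists>c\<in>C. puncture k c = z' \<and> truncate k c = z"
    if "z \<in> vecs k" "z' - puncture k (L z) \<in> shortened k C" for z z'
  proof -
    have "L z \<in> C" using L(1) by blast
    then show ?thesis
      using shortened_coset_lift[OF sub _ that(2)] L(2) that(1) by simp
  qed
  obtain b where b: "b \<in> vecs (n - k)" "\<forall>c1\<in>C. \<forall>c2\<in>C. \<forall>c3\<in>C. (\<Sum>j<k. c1 j * c2 j * c3 j) =
      (\<Sum>j<n - k. b j * puncture k c1 j * puncture k c2 j * puncture k c3 j)"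
    using cube_code_transversal_coefficients[OF _ C(2), of n] C(1) by (auto simp: code_subspace_def)
  show ?thesis
    unfolding supports_CCZ_def dual_dual[OF code_subspace_shortened[OF C(1)]]
  proof (intro bexI[OF _ b(1)] allI impI)
    fix z1 z2 z3 z1' z2' z3' :: "nat \<Rightarrow> 'a"
    assume z: "z1 \<in> vecs k" "z2 \<in> vecs k" "z3 \<in> vecs k"
      "z1' - (puncture k \<circ> L) z1 \<in> shortened k C" "z2' - (puncture k \<circ> L) z2 \<in> shortened k C"
      "z3' - (puncture k \<circ> L) z3 \<in> shortened k C"
    obtain c1 c2 c3 where c: "c1 \<in> C" "c2 \<in> C" "c3 \<in> C"
      "puncture k c1 = z1'" "puncture k c2 = z2'" "puncture k c3 = z3'"
      "truncate k c1 = z1" "truncate k c2 = z2" "truncate k c3 = z3"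
      using lift[OF z(1,4)[simplified]] lift[OF z(2,5)[simplified]] lift[OF z(3,6)[simplified]] by blast
    have "(\<Sum>j<k. z1 j * z2 j * z3 j) = (\<Sum>j<k. c1 j * c2 j * c3 j)"
      unfolding c(7-9)[symmetric] by (simp add: truncate_def)
    then show "(\<Sum>j<k. z1 j * z2 j * z3 j) = (\<Sum>j<n - k. b j * z1' j * z2' j * z3' j)"
      using b(2) c(1-6) by simp
  qed
qed

theorem theorem3p1:
  fixes C :: "(nat \<Rightarrow> 'a::{finite,field}) set"
    and n l d d' dperp :: nat
  assumes "classical_code n l d C"
    and "has_distance n (cube_code C) d'"
    and "has_distance n (dual n C) dperp"
  shows "\<forall>k. 0 < k \<and> k < min (min l d) (min d' dperp) \<longrightarrow>
    (\<exists>(QX :: (nat \<Rightarrow> 'a) set) QZ E. css_code_ge (n - k) k (min d dperp - k) QX QZ \<and>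
       z_encoding (n - k) k QX QZ E \<and> supports_CCZ (n - k) k QX QZ E)"
proof (intro allI impI)
  fix k assume k: "0 < k \<and> k < min (min l d) (min d' dperp)"
  have C: "code_subspace n C" "has_distance n C d"
    using assms(1) by (simp_all add: classical_code_def)
  then have sub: "fv.subspace C" by (simp add: code_subspace_def)
  have "k \<le> n" using has_distance_le_length[OF C(2)] k by simp
  have inj: "inj_on (puncture k) C"
    using inj_on_puncture[OF sub C(2)] k by simp
  have inj_cube: "inj_on (puncture k) (cube_code C)"
    using inj_on_puncture[OF _ assms(2)] k unfolding cube_code_def by (simp add: fv.subspace_span)
  have trunc: "truncate k ` C = vecs k"
    using truncate_image_eq_vecs[OF C(1) \<open>k \<le> n\<close> assms(3)] k by simp
  obtain L where L: "range L \<subseteq> C" "Vector_Spaces.linear fscale fscale L"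
    "\<forall>z\<in>truncate k ` C. truncate k (L z) = z"
    using ff.linear_exists_right_inverse_on[OF linear_truncate sub] by blast
  show "\<exists>(QX :: (nat \<Rightarrow> 'a) set) QZ E. css_code_ge (n - k) k (min d dperp - k) QX QZ \<and>
      z_encoding (n - k) k QX QZ E \<and> supports_CCZ (n - k) k QX QZ E"
    using css_code_ge_puncture_shortened[OF C assms(3), of k]
      z_encoding_puncture_shortened[OF C(1) inj L(2,1) L(3)[unfolded trunc]]
      supports_CCZ_puncture_shortened[OF C(1) inj_cube L(1) L(3)[unfolded trunc], of "puncture k ` C"] k
    by auto
qed

end
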